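(* Let $(\mathcal{C},\mathbb{E},\mathfrak{s})$ satisfy (ET1) and (ET2), let $\mathcal{I}$ be an ideal of $\mathcal{C}$ and $C\in\mathcal{C}$. Then every special $\mathcal{I}$-precover of $C$ is an $\mathcal{I}$-precover of $C$.
   Context: $\mathcal{C}$ is additive and $\mathbb{E}:\mathcal{C}^{\mathrm{op}}\times\mathcal{C}\to\mathrm{Ab}$ biadditive (ET1). For $\delta\in\mathbb{E}(C,A)$, $a:A\to A'$, $c:C'\to C$ write $a_\star\delta=\mathbb{E}(C,a)(\delta)$, $c^\star\delta=\mathbb{E}(c,A)(\delta)$. (ET2): $\mathfrak{s}$ is an additive realization of $\mathbb{E}$ in the sense of Nakaoka–Palu: it assigns to each $\delta\in\mathbb{E}(C,A)$ an equivalence class of sequences $A\xrightarrow{x}B\xrightarrow{y}C$ (equivalent if there is an isomorphism of middle terms commuting with the maps), the zero element is realized by split sequences $A\to A\oplus C\to C$, $\mathfrak{s}(\delta\oplus\delta')=\mathfrak{s}(\delta)\oplus\mathfrak{s}(\delta')$, and whenever $\delta\in\mathbb{E}(C,A)$, $\delta'\in\mathbb{E}(C',A')$, $a:A\to A'$, $c:C\to C'$ satisfy $a_\star\delta=c^\star\delta'$, there is $b:B\to B'$ making the realizing sequences into a commutative diagram. A realized pair is an $\mathbb{E}$-triangle $A\xrightarrow{x}B\xrightarrow{y}C\overset{\delta}{\dashrightarrow}$, and such a triple $(a,b,c)$ is a morphism of $\mathbb{E}$-triangles. An ideal is a class of morphisms containing zeros, closed under sums and composition with arbitrary morphisms. $\mathcal{I}^{\perp_{\mathbb{E}}}$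 is the class of $g:A\to Y$ with $m^\star g_\star\delta=0$ for all $m\in\mathcal{I}$, $m:X\to C$, $\delta\in\mathbb{E}(C,A)$. An $\mathcal{I}$-precover of $C$ is $i:X\to C$ in $\mathcal{I}$ through which every morphism $X'\to C$ in $\mathcal{I}$ factors. A special $\mathcal{I}$-precover of $C$ is $i:X\to C$ in $\mathcal{I}$ for which there exist $\mathbb{E}$-triangles $A\to B\to C\overset{\delta}{\dashrightarrow}$ and $A'\to X\xrightarrow{i}C\overset{\delta'}{\dashrightarrow}$ and a morphism of $\mathbb{E}$-triangles $(j,b,\mathrm{id}_C)$ from the first to the second with $j\in\mathcal{I}^{\perp_{\mathbb{E}}}$. *)

theory Defs
  imports Main
begin

text \<open>A category is given by a set of objects, a set of arrows with source and target,
  composition (cmp g f = g after f) and identities; the additive structure on hom-sets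
  is given by madd, mzero X Y (zero morphism X to Y) and mneg.\<close>

record ('o,'m) addcat =
  obj :: "'o set"
  arr :: "'m set"
  src :: "'m \<Rightarrow> 'o"
  tgt :: "'m \<Rightarrow> 'o"
  cmp :: "'m \<Rightarrow> 'm \<Rightarrow> 'm"
  idm :: "'o \<Rightarrow> 'm"
  madd :: "'m \<Rightarrow> 'm \<Rightarrow> 'm"
  mzero :: "'o \<Rightarrow> 'o \<Rightarrow> 'm"
  mneg :: "'m \<Rightarrow> 'm"

definition hom :: "('o,'m) addcat \<Rightarrow> 'o \<Rightarrow> 'o \<Rightarrow> 'm set" where
  "hom K X Y = {f \<in> arr K. src K f = X \<and> tgt K f = Y}"

definition abgroup :: "'a set \<Rightarrow> ('a \<Rightarrow> 'a \<Rightarrow> 'a) \<Rightarrow> 'a \<Rightarrow> ('a \<Rightarrow> 'a) \<Rightarrow> bool" where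
  "abgroup S p z n \<longleftrightarrow> z \<in> S \<and> (\<forall>x\<in>S. \<forall>y\<in>S. p x y \<in> S) \<and> (\<forall>x\<in>S. n x \<in> S)
     \<and> (\<forall>x\<in>S. \<forall>y\<in>S. \<forall>w\<in>S. p (p x y) w = p x (p y w))
     \<and> (\<forall>x\<in>S. \<forall>y\<in>S. p x y = p y x) \<and> (\<forall>x\<in>S. p z x = x) \<and> (\<forall>x\<in>S. p (n x) x = z)"

definition category :: "('o,'m) addcat \<Rightarrow> bool" where
  "category K \<longleftrightarrow>
     (\<forall>f\<in>arr K. src K f \<in> obj K \<and> tgt K f \<in> obj K)
   \<and> (\<forall>X\<in>obj K. idm K X \<in> hom K X X)
   \<and> (\<forall>X Y Z f g. f \<in> hom K X Y \<longrightarrow> g \<in> hom K Y Z \<longrightarrow> cmp K g f \<in> hom K X Z)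
   \<and> (\<forall>f\<in>arr K. cmp K f (idm K (src K f)) = f \<and> cmp K (idm K (tgt K f)) f = f)
   \<and> (\<forall>W X Y Z f g h. f \<in> hom K W X \<longrightarrow> g \<in> hom K X Y \<longrightarrow> h \<in> hom K Y Z \<longrightarrow>
        cmp K h (cmp K g f) = cmp K (cmp K h g) f)"

definition preadditive :: "('o,'m) addcat \<Rightarrow> bool" where
  "preadditive K \<longleftrightarrow> category K
   \<and> (\<forall>X\<in>obj K. \<forall>Y\<in>obj K. abgroup (hom K X Y) (madd K) (mzero K X Y) (mneg K))
   \<and> (\<forall>X Y Z f g h. f \<in> hom K X Y \<longrightarrow> g \<in> hom K X Y \<longrightarrow> h \<in> hom K Y Z \<longrightarrow>
        cmp K h (madd K f g) = madd K (cmp K h f) (cmp K h g))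
   \<and> (\<forall>X Y Z f g h. f \<in> hom K X Y \<longrightarrow> g \<in> hom K Y Z \<longrightarrow> h \<in> hom K Y Z \<longrightarrow>
        cmp K (madd K g h) f = madd K (cmp K g f) (cmp K h f))"

definition is_biprod :: "('o,'m) addcat \<Rightarrow> 'o \<Rightarrow> 'o \<Rightarrow> 'o \<Rightarrow> 'm \<Rightarrow> 'm \<Rightarrow> 'm \<Rightarrow> 'm \<Rightarrow> bool" where
  "is_biprod K A B P i1 i2 p1 p2 \<longleftrightarrow> P \<in> obj K
   \<and> i1 \<in> hom K A P \<and> i2 \<in> hom K B P \<and> p1 \<in> hom K P A \<and> p2 \<in> hom K P B
   \<and> cmp K p1 i1 = idm K A \<and> cmp K p2 i2 = idm K B
   \<and> cmp K p1 i2 = mzero K B A \<and> cmp K p2 i1 = mzero K A B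
   \<and> madd K (cmp K i1 p1) (cmp K i2 p2) = idm K P"

definition additive_category :: "('o,'m) addcat \<Rightarrow> bool" where
  "additive_category K \<longleftrightarrow> preadditive K
   \<and> (\<exists>Z\<in>obj K. idm K Z = mzero K Z Z)
   \<and> (\<forall>A\<in>obj K. \<forall>B\<in>obj K. \<exists>P i1 i2 p1 p2. is_biprod K A B P i1 i2 p1 p2)"

definition iso :: "('o,'m) addcat \<Rightarrow> 'm \<Rightarrow> bool" where
  "iso K b \<longleftrightarrow> b \<in> arr K \<and> (\<exists>b'\<in>hom K (tgt K b) (src K b).
      cmp K b' b = idm K (src K b) \<and> cmp K b b' = idm K (tgt K b))"

text \<open>Ext E C A is the abelian group E(C,A) (operations eadd E C A, ezero E C A, eneg E C A).
  For a : A \<rightarrow> A' and \<delta> \<in> E(C,A), epush E C a \<delta> is a_\<star>\<delta> = E(C,a)(\<delta>) \<in> E(C,A').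
  For c : C' \<rightarrow> C and \<delta> \<in> E(C,A), epull E A c \<delta> is c^\<star>\<delta> = E(c,A)(\<delta>) \<in> E(C',A).\<close>

record ('o,'m,'e) bifun =
  Ext :: "'o \<Rightarrow> 'o \<Rightarrow> 'e set"
  eadd :: "'o \<Rightarrow> 'o \<Rightarrow> 'e \<Rightarrow> 'e \<Rightarrow> 'e"
  ezero :: "'o \<Rightarrow> 'o \<Rightarrow> 'e"
  eneg :: "'o \<Rightarrow> 'o \<Rightarrow> 'e \<Rightarrow> 'e"
  epush :: "'o \<Rightarrow> 'm \<Rightarrow> 'e \<Rightarrow> 'e"
  epull :: "'o \<Rightarrow> 'm \<Rightarrow> 'e \<Rightarrow> 'e"

definition ET1 :: "('o,'m) addcat \<Rightarrow> ('o,'m,'e) bifun \<Rightarrow> bool" where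
  "ET1 K E \<longleftrightarrow> additive_category K
   \<and> (\<forall>C\<in>obj K. \<forall>A\<in>obj K. abgroup (Ext E C A) (eadd E C A) (ezero E C A) (eneg E C A))
   \<comment> \<open>covariant part E(C,-)\<close>
   \<and> (\<forall>C\<in>obj K. \<forall>A A' a. a \<in> hom K A A' \<longrightarrow> (\<forall>d\<in>Ext E C A. epush E C a d \<in> Ext E C A'))
   \<and> (\<forall>C\<in>obj K. \<forall>A A' a. a \<in> hom K A A' \<longrightarrow> (\<forall>d\<in>Ext E C A. \<forall>d'\<in>Ext E C A.
        epush E C a (eadd E C A d d') = eadd E C A' (epush E C a d) (epush E C a d')))
   \<and> (\<forall>C\<in>obj K. \<forall>A\<in>obj K. \<forall>d\<in>Ext E C A. epush E C (idm K A) d = d)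
   \<and> (\<forall>C\<in>obj K. \<forall>A A' A'' a a'. a \<in> hom K A A' \<longrightarrow> a' \<in> hom K A' A'' \<longrightarrow>
        (\<forall>d\<in>Ext E C A. epush E C (cmp K a' a) d = epush E C a' (epush E C a d)))
   \<and> (\<forall>C\<in>obj K. \<forall>A A' a a'. a \<in> hom K A A' \<longrightarrow> a' \<in> hom K A A' \<longrightarrow>
        (\<forall>d\<in>Ext E C A. epush E C (madd K a a') d = eadd E C A' (epush E C a d) (epush E C a' d)))
   \<comment> \<open>contravariant part E(-,A)\<close>
   \<and> (\<forall>A\<in>obj K. \<forall>C C' c. c \<in> hom K C' C \<longrightarrow> (\<forall>d\<in>Ext E C A. epull E A c d \<in> Ext E C' A))
   \<and> (\<forall>A\<in>obj K. \<forall>C C' c. c \<in> hom K C' C \<longrightarrow> (\<forall>d\<in>Ext E C A. \<forall>d'\<in>Ext E C A.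
        epull E A c (eadd E C A d d') = eadd E C' A (epull E A c d) (epull E A c d')))
   \<and> (\<forall>A\<in>obj K. \<forall>C\<in>obj K. \<forall>d\<in>Ext E C A. epull E A (idm K C) d = d)
   \<and> (\<forall>A\<in>obj K. \<forall>C C' C'' c c'. c \<in> hom K C' C \<longrightarrow> c' \<in> hom K C'' C' \<longrightarrow>
        (\<forall>d\<in>Ext E C A. epull E A (cmp K c c') d = epull E A c' (epull E A c d)))
   \<and> (\<forall>A\<in>obj K. \<forall>C C' c c'. c \<in> hom K C' C \<longrightarrow> c' \<in> hom K C' C \<longrightarrow>
        (\<forall>d\<in>Ext E C A. epull E A (madd K c c') d = eadd E C' A (epull E A c d) (epull E A c' d)))
   \<comment> \<open>bifunctoriality\<close>
   \<and> (\<forall>A A' C C' a c. a \<in> hom K A A' \<longrightarrow> c \<in> hom K C' C \<longrightarrow>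
        (\<forall>d\<in>Ext E C A. epull E A' c (epush E C a d) = epush E C' a (epull E A c d)))"

definition seq_equiv :: "('o,'m) addcat \<Rightarrow> 'm \<Rightarrow> 'm \<Rightarrow> 'm \<Rightarrow> 'm \<Rightarrow> bool" where
  "seq_equiv K x y x' y' \<longleftrightarrow> (\<exists>b\<in>hom K (tgt K x) (tgt K x'). iso K b
      \<and> cmp K b x = x' \<and> cmp K y' b = y)"

text \<open>A realization: s C A d x y means that the sequence A -x-> B -y-> C belongs to the
  equivalence class s(d), for d \<in> E(C,A).\<close>
type_synonym ('o,'m,'e) realization = "'o \<Rightarrow> 'o \<Rightarrow> 'e \<Rightarrow> 'm \<Rightarrow> 'm \<Rightarrow> bool"

definition realization :: "('o,'m) addcat \<Rightarrow> ('o,'m,'e) bifun \<Rightarrow> ('o,'m,'e) realization \<Rightarrow> bool" where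
  "realization K E s \<longleftrightarrow>
     \<comment> \<open>s(d) is an equivalence class of sequences A \<rightarrow> B \<rightarrow> C\<close>
     (\<forall>C\<in>obj K. \<forall>A\<in>obj K. \<forall>d\<in>Ext E C A.
        (\<exists>x y. s C A d x y)
      \<and> (\<forall>x y. s C A d x y \<longrightarrow> (\<exists>B\<in>obj K. x \<in> hom K A B \<and> y \<in> hom K B C))
      \<and> (\<forall>x y x' y'. s C A d x y \<longrightarrow> s C A d x' y' \<longrightarrow> seq_equiv K x y x' y')
      \<and> (\<forall>x y x' y' B'. s C A d x y \<longrightarrow> x' \<in> hom K A B' \<longrightarrow> y' \<in> hom K B' C
            \<longrightarrow> seq_equiv K x y x' y' \<longrightarrow> s C A d x' y'))
     \<comment> \<open>realizing morphisms of extensions\<close>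
   \<and> (\<forall>A C A' C' d d' a c x y x' y'. A \<in> obj K \<longrightarrow> C \<in> obj K \<longrightarrow> A' \<in> obj K \<longrightarrow> C' \<in> obj K
        \<longrightarrow> d \<in> Ext E C A \<longrightarrow> d' \<in> Ext E C' A' \<longrightarrow> a \<in> hom K A A' \<longrightarrow> c \<in> hom K C C'
        \<longrightarrow> epush E C a d = epull E A' c d' \<longrightarrow> s C A d x y \<longrightarrow> s C' A' d' x' y'
        \<longrightarrow> (\<exists>b\<in>hom K (tgt K x) (tgt K x'). cmp K b x = cmp K x' a \<and> cmp K c y = cmp K y' b))"

definition ET2 :: "('o,'m) addcat \<Rightarrow> ('o,'m,'e) bifun \<Rightarrow> ('o,'m,'e) realization \<Rightarrow> bool" where
  "ET2 K E s \<longleftrightarrow> realization K E s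
   \<comment> \<open>s(0) is the class of the split sequence A \<rightarrow> A \<oplus> C \<rightarrow> C\<close>
   \<and> (\<forall>A\<in>obj K. \<forall>C\<in>obj K. \<forall>P i1 i2 p1 p2. is_biprod K A C P i1 i2 p1 p2
        \<longrightarrow> s C A (ezero E C A) i1 p2)
   \<comment> \<open>s(d \<oplus> d') = s(d) \<oplus> s(d')\<close>
   \<and> (\<forall>A B C A' B' C' d d' x y x' y' PA iA1 iA2 pA1 pA2 PB iB1 iB2 pB1 pB2 PC iC1 iC2 pC1 pC2.
        A \<in> obj K \<longrightarrow> C \<in> obj K \<longrightarrow> A' \<in> obj K \<longrightarrow> C' \<in> obj K
        \<longrightarrow> d \<in> Ext E C A \<longrightarrow> d' \<in> Ext E C' A'
        \<longrightarrow> s C A d x y \<longrightarrow> s C' A' d' x' y'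
        \<longrightarrow> x \<in> hom K A B \<longrightarrow> x' \<in> hom K A' B'
        \<longrightarrow> is_biprod K A A' PA iA1 iA2 pA1 pA2
        \<longrightarrow> is_biprod K B B' PB iB1 iB2 pB1 pB2
        \<longrightarrow> is_biprod K C C' PC iC1 iC2 pC1 pC2
        \<longrightarrow> s PC PA
              (eadd E PC PA (epush E PC iA1 (epull E A pC1 d)) (epush E PC iA2 (epull E A' pC2 d')))
              (madd K (cmp K iB1 (cmp K x pA1)) (cmp K iB2 (cmp K x' pA2)))
              (madd K (cmp K iC1 (cmp K y pB1)) (cmp K iC2 (cmp K y' pB2))))"

definition E_triangle :: "('o,'m) addcat \<Rightarrow> ('o,'m,'e) bifun \<Rightarrow> ('o,'m,'e) realization
    \<Rightarrow> 'o \<Rightarrow> 'o \<Rightarrow> 'o \<Rightarrow> 'm \<Rightarrow> 'm \<Rightarrow> 'e \<Rightarrow> bool" where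
  "E_triangle K E s A B C x y d \<longleftrightarrow> A \<in> obj K \<and> B \<in> obj K \<and> C \<in> obj K
     \<and> x \<in> hom K A B \<and> y \<in> hom K B C \<and> d \<in> Ext E C A \<and> s C A d x y"

definition E_tri_morphism :: "('o,'m) addcat \<Rightarrow> ('o,'m,'e) bifun
    \<Rightarrow> 'o \<Rightarrow> 'o \<Rightarrow> 'o \<Rightarrow> 'm \<Rightarrow> 'm \<Rightarrow> 'e
    \<Rightarrow> 'o \<Rightarrow> 'o \<Rightarrow> 'o \<Rightarrow> 'm \<Rightarrow> 'm \<Rightarrow> 'e \<Rightarrow> 'm \<Rightarrow> 'm \<Rightarrow> 'm \<Rightarrow> bool" where
  "E_tri_morphism K E A B C x y d A' B' C' x' y' d' a b c \<longleftrightarrow>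
     a \<in> hom K A A' \<and> b \<in> hom K B B' \<and> c \<in> hom K C C'
     \<and> epush E C a d = epull E A' c d'
     \<and> cmp K b x = cmp K x' a \<and> cmp K c y = cmp K y' b"

definition ideal :: "('o,'m) addcat \<Rightarrow> 'm set \<Rightarrow> bool" where
  "ideal K I \<longleftrightarrow> I \<subseteq> arr K
   \<and> (\<forall>X\<in>obj K. \<forall>Y\<in>obj K. mzero K X Y \<in> I)
   \<and> (\<forall>f\<in>I. \<forall>g\<in>I. src K f = src K g \<longrightarrow> tgt K f = tgt K g \<longrightarrow> madd K f g \<in> I)
   \<and> (\<forall>f\<in>I. \<forall>g\<in>arr K. src K g = tgt K f \<longrightarrow> cmp K g f \<in> I)
   \<and> (\<forall>f\<in>I. \<forall>g\<in>arr K. tgt K g = src K f \<longrightarrow> cmp K f g \<in> I)"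

definition Eperp :: "('o,'m) addcat \<Rightarrow> ('o,'m,'e) bifun \<Rightarrow> 'm set \<Rightarrow> 'm set" where
  "Eperp K E I = {g \<in> arr K. \<forall>m\<in>I. \<forall>d\<in>Ext E (tgt K m) (src K g).
      epull E (tgt K g) m (epush E (tgt K m) g d) = ezero E (src K m) (tgt K g)}"

definition precover :: "('o,'m) addcat \<Rightarrow> 'm set \<Rightarrow> 'o \<Rightarrow> 'm \<Rightarrow> bool" where
  "precover K I C i \<longleftrightarrow> i \<in> I \<and> tgt K i = C
   \<and> (\<forall>f\<in>I. tgt K f = C \<longrightarrow> (\<exists>g\<in>hom K (src K f) (src K i). cmp K i g = f))"

definition special_precover :: "('o,'m) addcat \<Rightarrow> ('o,'m,'e) bifun \<Rightarrow> ('o,'m,'e) realization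
    \<Rightarrow> 'm set \<Rightarrow> 'o \<Rightarrow> 'm \<Rightarrow> bool" where
  "special_precover K E s I C i \<longleftrightarrow> i \<in> I \<and> tgt K i = C
   \<and> (\<exists>A B x y d A' x' d' j b.
        E_triangle K E s A B C x y d
      \<and> E_triangle K E s A' (src K i) C x' i d'
      \<and> E_tri_morphism K E A B C x y d A' (src K i) C x' i d' j b (idm K C)
      \<and> j \<in> Eperp K E I)"

end

theory Submission
  imports Defs
begin

text \<open>Let \<open>i : X\<^sub>i \<rightarrow> C\<close> be special, witnessed by \<open>(j, b, 1\<^sub>C)\<close> with
  \<open>j \<in> \<I>\<^sup>\<perp>\<close>, so that \<open>\<delta>' = j\<^sub>\<star>\<delta>\<close>. For \<open>f : X \<rightarrow> C\<close> in \<open>\<I>\<close> we get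
  \<open>f\<^sup>\<star>\<delta>' = f\<^sup>\<star>j\<^sub>\<star>\<delta> = 0\<close>. The zero extension is realized by the split sequence
  \<open>A' \<rightarrow> A' \<oplus> X \<rightarrow> X\<close>, so \<open>(1\<^sub>A', -, f)\<close> lifts to a morphism of \<open>\<E>\<close>-triangles
  whose middle component \<open>b'\<close> satisfies \<open>i b' = f p\<^sub>2\<close>; then \<open>g = b' i\<^sub>2\<close> gives
  \<open>i g = f\<close>.\<close>

lemma category_comp_hom:
  "\<lbrakk>category K; f \<in> hom K X Y; g \<in> hom K Y Z\<rbrakk> \<Longrightarrow> cmp K g f \<in> hom K X Z"
  unfolding category_def by blast

lemma category_comp_assoc:
  "\<lbrakk>category K; f \<in> hom K W X; g \<in> hom K X Y; h \<in> hom K Y Z\<rbrakk>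
    \<Longrightarrow> cmp K h (cmp K g f) = cmp K (cmp K h g) f"
  unfolding category_def by blast

lemma category_comp_idm_right:
  "\<lbrakk>category K; f \<in> hom K X Y\<rbrakk> \<Longrightarrow> cmp K f (idm K X) = f"
  unfolding category_def hom_def by auto

lemma category_src_obj:
  "\<lbrakk>category K; f \<in> hom K X Y\<rbrakk> \<Longrightarrow> X \<in> obj K"
  unfolding category_def hom_def by auto

lemma category_idm_hom:
  "\<lbrakk>category K; X \<in> obj K\<rbrakk> \<Longrightarrow> idm K X \<in> hom K X X"
  unfolding category_def by blast

lemma ET1_category: "ET1 K E \<Longrightarrow> category K"
  unfolding ET1_def additive_category_def preadditive_def by blast

lemma ET1_biprod_exists:
  "\<lbrakk>ET1 K E; A \<in> obj K; B \<in> obj K\<rbrakk> \<Longrightarrow> \<exists>P i1 i2 p1 p2. is_biprod K A B P i1 i2 p1 p2"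
  unfolding ET1_def additive_category_def by (elim conjE) blast

lemma ET1_ezero_Ext:
  assumes "ET1 K E" "C \<in> obj K" "A \<in> obj K"
  shows "ezero E C A \<in> Ext E C A"
proof -
  have "abgroup (Ext E C A) (eadd E C A) (ezero E C A) (eneg E C A)"
    using assms unfolding ET1_def by (elim conjE) blast
  then show ?thesis unfolding abgroup_def by blast
qed

lemma ET1_epush_idm:
  "\<lbrakk>ET1 K E; C \<in> obj K; A \<in> obj K; d \<in> Ext E C A\<rbrakk> \<Longrightarrow> epush E C (idm K A) d = d"
  unfolding ET1_def by (elim conjE) blast

lemma ET1_epull_idm:
  assumes "ET1 K E" "C \<in> obj K" "A \<in> obj K" "d \<in> Ext E C A"
  shows "epull E A (idm K C) d = d"
proof -
  have "\<forall>A\<in>obj K. \<forall>C\<in>obj K. \<forall>d\<in>Ext E C A. epull E A (idm K C) d = d"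
    using assms(1) unfolding ET1_def by (elim conjE) assumption
  then show ?thesis using assms(2-) by blast
qed

lemma ET2_split_realizes_ezero:
  "\<lbrakk>ET2 K E s; A \<in> obj K; C \<in> obj K; is_biprod K A C P i1 i2 p1 p2\<rbrakk>
    \<Longrightarrow> s C A (ezero E C A) i1 p2"
  unfolding ET2_def by (elim conjE) blast

lemma ET2_morphism_lift:
  assumes "ET2 K E s"
    and "A \<in> obj K" "C \<in> obj K" "A' \<in> obj K" "C' \<in> obj K"
    and "d \<in> Ext E C A" "d' \<in> Ext E C' A'" "a \<in> hom K A A'" "c \<in> hom K C C'"
    and "epush E C a d = epull E A' c d'" "s C A d x y" "s C' A' d' x' y'"
  shows "\<exists>b\<in>hom K (tgt K x) (tgt K x'). cmp K b x = cmp K x' a \<and> cmp K c y = cmp K y' b"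
proof -
  have "realization K E s" using assms(1) unfolding ET2_def by blast
  then have "\<forall>A C A' C' d d' a c x y x' y'. A \<in> obj K \<longrightarrow> C \<in> obj K \<longrightarrow> A' \<in> obj K
      \<longrightarrow> C' \<in> obj K \<longrightarrow> d \<in> Ext E C A \<longrightarrow> d' \<in> Ext E C' A' \<longrightarrow> a \<in> hom K A A'
      \<longrightarrow> c \<in> hom K C C' \<longrightarrow> epush E C a d = epull E A' c d' \<longrightarrow> s C A d x y
      \<longrightarrow> s C' A' d' x' y'
      \<longrightarrow> (\<exists>b\<in>hom K (tgt K x) (tgt K x'). cmp K b x = cmp K x' a \<and> cmp K c y = cmp K y' b)"
    unfolding realization_def by (elim conjE) assumption
  from this[rule_format, OF assms(2-)] show ?thesis .
qed

lemma Eperp_epull_epush: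
  assumes "j \<in> Eperp K E I" "j \<in> hom K A A'" "m \<in> I" "m \<in> hom K X C" "d \<in> Ext E C A"
  shows "epull E A' m (epush E C j d) = ezero E X A'"
  using assms unfolding Eperp_def hom_def by auto

text \<open>The inclusion kernel \<open>\<subseteq>\<close> image in the exact sequence
  \<open>\<C>(X, B) \<rightarrow> \<C>(X, C) \<rightarrow> \<E>(X, A)\<close>, \<open>f \<mapsto> f\<^sup>\<star>\<delta>\<close>.\<close>

lemma E_triangle_factor_if_epull_zero:
  assumes ET1: "ET1 K E" and ET2: "ET2 K E s"
    and tri: "E_triangle K E s A B C x y d"
    and f: "f \<in> hom K X C" and vanish: "epull E A f d = ezero E X A"
  shows "\<exists>g\<in>hom K X B. cmp K y g = f"
proof -
  have cat: "category K" using ET1 by (rule ET1_category)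
  have A: "A \<in> obj K" and C: "C \<in> obj K" and x: "x \<in> hom K A B"
    and d: "d \<in> Ext E C A" and sd: "s C A d x y"
    using tri unfolding E_triangle_def by auto
  have X: "X \<in> obj K" using cat f by (rule category_src_obj)
  obtain P i1 i2 p1 p2 where bp: "is_biprod K A X P i1 i2 p1 p2"
    using ET1_biprod_exists[OF ET1 A X] by blast
  have i1: "i1 \<in> hom K A P" and i2: "i2 \<in> hom K X P" and p2: "p2 \<in> hom K P X"
    and p2i2: "cmp K p2 i2 = idm K X"
    using bp unfolding is_biprod_def by auto
  have z: "ezero E X A \<in> Ext E X A" using ET1 X A by (rule ET1_ezero_Ext)
  have "epush E X (idm K A) (ezero E X A) = epull E A f d"
    using ET1_epush_idm[OF ET1 X A z] vanish by simp
  then obtain b where b: "b \<in> hom K (tgt K i1) (tgt K x)" and yb: "cmp K f p2 = cmp K y b"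
    using ET2_morphism_lift[OF ET2 A X A C z d category_idm_hom[OF cat A] f _
        ET2_split_realizes_ezero[OF ET2 A X bp] sd]
    by blast
  have b: "b \<in> hom K P B" using b i1 x unfolding hom_def by auto
  have y: "y \<in> hom K B C" using tri unfolding E_triangle_def by auto
  have "cmp K y (cmp K b i2) = cmp K (cmp K f p2) i2"
    using category_comp_assoc[OF cat i2 b y] yb by simp
  also have "\<dots> = f"
    using category_comp_assoc[OF cat i2 p2 f] p2i2 category_comp_idm_right[OF cat f] by simp
  finally show ?thesis using category_comp_hom[OF cat i2 b] by blast
qed

lemma E_tri_morphism_idm_epush:
  assumes "ET1 K E" "C \<in> obj K" "A' \<in> obj K" "d' \<in> Ext E C A'"
    and "E_tri_morphism K E A B C x y d A' B' C x' y' d' j b (idm K C)"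
  shows "epush E C j d = d'"
  using assms ET1_epull_idm[OF assms(1-4)] unfolding E_tri_morphism_def by simp

theorem proposition3p6:
  fixes K :: "('o,'m) addcat" and E :: "('o,'m,'e) bifun" and s :: "('o,'m,'e) realization"
    and I :: "'m set" and C :: 'o and i :: 'm
  assumes "ET1 K E" and "ET2 K E s"
    and "ideal K I" and "C \<in> obj K"
    and "special_precover K E s I C i"
  shows "precover K I C i"
proof -
  obtain A B x y d A' x' d' j b where i: "i \<in> I" "tgt K i = C"
    and tri: "E_triangle K E s A' (src K i) C x' i d'"
    and mor: "E_tri_morphism K E A B C x y d A' (src K i) C x' i d' j b (idm K C)"
    and d: "d \<in> Ext E C A" and j: "j \<in> Eperp K E I"
    using assms(5) unfolding special_precover_def E_triangle_def by blast
  have d': "epush E C j d = d'"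
    using E_tri_morphism_idm_epush[OF assms(1,4) _ _ mor] tri unfolding E_triangle_def by blast
  have "\<exists>g\<in>hom K (src K f) (src K i). cmp K i g = f" if f: "f \<in> I" "tgt K f = C" for f
  proof (rule E_triangle_factor_if_epull_zero[OF assms(1,2) tri])
    show fh: "f \<in> hom K (src K f) C"
      using f assms(3) unfolding ideal_def hom_def by auto
    show "epull E A' f d' = ezero E (src K f) A'"
      using Eperp_epull_epush[OF j _ f(1) fh d] mor d' unfolding E_tri_morphism_def by blast
  qed
  then show ?thesis using i unfolding precover_def by blast
qed

end
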